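(* Let $N\ge2$, $d=\pi(N)$, let $p_1<\dots<p_d$ be the primes up to $N$, and for $n=\prod_{j=1}^dp_j^{\kappa_j}\le N$ write $z(n)=\prod_{j=1}^dz_j^{\kappa_j}$ for $z=(z_1,\dots,z_d)\in\mathbb{T}^d$. Let $F(z)=\sum_{n=1}^Na_nz(n)$ with complex coefficients $a_n$, let $\|F\|_{L^\infty(\mathbb{T}^d)}=\sup_{z\in\mathbb{T}^d}|F(z)|$, and for $0<\lambda<1$ set \[X_\lambda=\{z\in\mathbb{T}^d:|F(z)|\ge\lambda\|F\|_{L^\infty(\mathbb{T}^d)}\}.\] Then \[\mu_d(X_\lambda)\ge\Big(\frac{1-\lambda}{\pi^2}\Big)^{\pi(N)}e^{-\sqrt N}.\]
   Context: $\mathbb{T}^d=\{(z_1,\dots,z_d):|z_j|=1\}$ is the polytorus and $\mu_d$ is the normalized product Lebesgue (Haar) measure on it; $\pi(N)$ is the number of primes $\le N$. *)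

theory Defs
  imports "HOL-Probability.Probability" "HOL-Computational_Algebra.Primes"
begin

text \<open>Primes up to N; the polytorus T^d is indexed by these primes
  (coordinate z p corresponds to z_j for p = p_j).\<close>
definition primes_upto :: "nat \<Rightarrow> nat set" where
  "primes_upto N = {p. prime p \<and> p \<le> N}"

definition circle_measure :: "complex measure" where
  "circle_measure = distr (restrict_space lborel {0..1::real}) borel (\<lambda>t. cis (2 * pi * t))"

definition torus_measure :: "nat set \<Rightarrow> (nat \<Rightarrow> complex) measure" where
  "torus_measure P = PiM P (\<lambda>_. circle_measure)"

definition torus :: "nat set \<Rightarrow> (nat \<Rightarrow> complex) set" where
  "torus P = PiE P (\<lambda>_. sphere 0 1)"

definition zmon :: "(nat \<Rightarrow> complex) \<Rightarrow> nat \<Rightarrow> complex" where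
  "zmon z n = (\<Prod>p\<in>prime_factors n. z p ^ multiplicity p n)"

definition dirichlet_poly :: "nat \<Rightarrow> (nat \<Rightarrow> complex) \<Rightarrow> (nat \<Rightarrow> complex) \<Rightarrow> complex" where
  "dirichlet_poly N a z = (\<Sum>n=1..N. a n * zmon z n)"

end

theory Submission
  imports Defs
begin

text \<open>Let \<open>z0\<close> be a point where \<open>|F|\<close> attains its maximum \<open>M\<close>. Along the rotation
  \<open>z p = z0 p * cis (u * t p)\<close> the polynomial \<open>F\<close> becomes an exponential sum in \<open>u\<close> whose
  frequencies are \<open>\<Sum>p. \<kappa>\<^sub>p(n) * t p\<close>. If \<open>\<bar>t p\<bar> \<le> (1 - lam) * ln p / ln N\<close>, these
  frequencies are bounded by \<open>(1 - lam) * ln n / ln N \<le> 1 - lam\<close>, so Bernstein's inequality gives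
  \<open>|F z - F z0| \<le> (1 - lam) * M\<close>. Hence \<open>X\<^sub>\<lambda>\<close> contains the product of the arcs of half-length
  \<open>(1 - lam) * ln p / ln N\<close> around \<open>z0 p\<close>, of measure
  \<open>((1 - lam) / pi\<^sup>2) ^ \<pi>(N) * (\<Prod>p. pi * ln p / ln N)\<close>, and the last product is at least
  \<open>exp (- sqrt N)\<close>.\<close>

definition inv_sqrt_coeff :: "nat \<Rightarrow> real" where
  "inv_sqrt_coeff n = (-1) ^ n * ((-1/2) gchoose n)"

definition arcsin_coeff :: "nat \<Rightarrow> real" where
  "arcsin_coeff n = inv_sqrt_coeff n / (2 * real n + 1)"

definition arcsin_series_coeff :: "nat \<Rightarrow> real" where
  "arcsin_series_coeff k = (if odd k then arcsin_coeff (k div 2) else 0)"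

lemma inv_sqrt_coeff_nonneg: "0 \<le> inv_sqrt_coeff n"
proof -
  have "inv_sqrt_coeff n = (-1) ^ n * (-1) ^ n * ((1/2 + real n - 1) gchoose n)"
    unfolding inv_sqrt_coeff_def using gbinomial_minus[of "1/2::real" n] by simp
  also have "\<dots> = (1/2 + real n - 1) gchoose n"
    by (simp flip: power_mult_distrib)
  also have "\<dots> \<ge> 0"
    unfolding gbinomial_prod_rev by (intro divide_nonneg_pos prod_nonneg) auto
  finally show ?thesis .
qed

lemma arcsin_coeff_nonneg: "0 \<le> arcsin_coeff n"
  unfolding arcsin_coeff_def using inv_sqrt_coeff_nonneg[of n] by simp

lemma arcsin_coeff_le: "arcsin_coeff n \<le> inv_sqrt_coeff n"
  unfolding arcsin_coeff_def using inv_sqrt_coeff_nonneg[of n]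
  by (simp add: divide_le_eq mult_le_cancel_left1)

lemma sums_inv_sqrt_coeff:
  fixes w :: real
  assumes "\<bar>w\<bar> < 1"
  shows "(\<lambda>n. inv_sqrt_coeff n * w ^ n) sums (1 - w) powr (-1/2)"
proof -
  have "(\<lambda>n. ((-1/2) gchoose n) * (-w) ^ n) sums (1 + -w) powr (-1/2)"
    using assms by (intro gen_binomial_real) simp
  moreover have "((-1/2) gchoose n) * (-w) ^ n = inv_sqrt_coeff n * w ^ n" for n
    unfolding inv_sqrt_coeff_def by (subst power_minus) (simp only: mult_ac)
  ultimately show ?thesis by simp
qed

lemma summable_arcsin_coeff_power:
  fixes y :: real
  assumes "\<bar>y\<bar> < 1"
  shows "summable (\<lambda>n. arcsin_coeff n * y ^ (2 * n + 1))"
proof (rule summable_comparison_test'[where N = 0])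
  have "\<bar>y\<^sup>2\<bar> < 1" using assms by (simp add: abs_square_less_1)
  from sums_summable[OF sums_inv_sqrt_coeff[OF this]]
  show "summable (\<lambda>n. inv_sqrt_coeff n * (y\<^sup>2) ^ n)" .
  fix n
  have "norm (arcsin_coeff n * y ^ (2 * n + 1)) = arcsin_coeff n * \<bar>y\<bar> ^ (2 * n + 1)"
    using arcsin_coeff_nonneg by (simp add: abs_mult power_abs)
  also have "\<dots> \<le> inv_sqrt_coeff n * \<bar>y\<bar> ^ (2 * n)"
    using assms arcsin_coeff_le inv_sqrt_coeff_nonneg
    by (intro mult_mono power_decreasing) auto
  also have "\<dots> = inv_sqrt_coeff n * (y\<^sup>2) ^ n"
    by (simp add: power_mult power_abs)
  finally show "norm (arcsin_coeff n * y ^ (2 * n + 1)) \<le> inv_sqrt_coeff n * (y\<^sup>2) ^ n" .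
qed

lemma sums_arcsin_series_coeff_iff:
  "(\<lambda>k. arcsin_series_coeff k * y ^ k) sums c \<longleftrightarrow>
   (\<lambda>n. arcsin_coeff n * y ^ (2 * n + 1)) sums c"
proof -
  have "(\<lambda>n. arcsin_series_coeff (2 * n + 1) * y ^ (2 * n + 1)) sums c \<longleftrightarrow>
        (\<lambda>k. arcsin_series_coeff k * y ^ k) sums c"
    by (rule sums_mono_reindex) (auto simp: strict_mono_def arcsin_series_coeff_def elim!: oddE)
  thus ?thesis by (simp add: arcsin_series_coeff_def)
qed

lemma arcsin_series_has_derivative:
  fixes y :: real
  assumes "\<bar>y\<bar> < 1"
  shows "((\<lambda>y. \<Sum>k. arcsin_series_coeff k * y ^ k) has_real_derivative inverse (sqrt (1 - y\<^sup>2))) (at y)"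
proof -
  define K where "K = (1 + \<bar>y\<bar>) / 2"
  have K: "\<bar>K\<bar> < 1" "\<bar>y\<bar> < \<bar>K\<bar>" using assms by (auto simp: K_def)
  have "summable (\<lambda>k. arcsin_series_coeff k * K ^ k)"
    using summable_sums[OF summable_arcsin_coeff_power[OF K(1)]] sums_arcsin_series_coeff_iff
    by (blast intro: sums_summable)
  from termdiffs_strong[OF this, of y] K
  have deriv: "((\<lambda>y. \<Sum>k. arcsin_series_coeff k * y ^ k) has_real_derivative
                 (\<Sum>k. diffs arcsin_series_coeff k * y ^ k)) (at y)"
    by simp
  have "\<bar>y\<^sup>2\<bar> < 1" using assms by (simp add: abs_square_less_1)
  have "(\<lambda>n. diffs arcsin_series_coeff (2 * n) * y ^ (2 * n)) sums c \<longleftrightarrow>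
        (\<lambda>k. diffs arcsin_series_coeff k * y ^ k) sums c" for c
    by (rule sums_mono_reindex)
       (auto simp: strict_mono_def arcsin_series_coeff_def diffs_def elim!: evenE)
  moreover have "diffs arcsin_series_coeff (2 * n) * y ^ (2 * n) = inv_sqrt_coeff n * (y\<^sup>2) ^ n" for n
    by (simp add: diffs_def arcsin_series_coeff_def arcsin_coeff_def add.commute power_mult)
  ultimately have "(\<lambda>k. diffs arcsin_series_coeff k * y ^ k) sums (1 - y\<^sup>2) powr (-1/2)"
    using sums_inv_sqrt_coeff[OF \<open>\<bar>y\<^sup>2\<bar> < 1\<close>] by simp
  hence "(\<Sum>k. diffs arcsin_series_coeff k * y ^ k) = (1 - y\<^sup>2) powr (-1/2)"
    by (rule sums_unique[symmetric])
  also have "\<dots> = inverse (sqrt (1 - y\<^sup>2))"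
    using \<open>\<bar>y\<^sup>2\<bar> < 1\<close> by (simp add: powr_minus powr_half_sqrt)
  finally show ?thesis using deriv by simp
qed

lemma sums_arcsin:
  fixes y :: real
  assumes "\<bar>y\<bar> < 1"
  shows "(\<lambda>n. arcsin_coeff n * y ^ (2 * n + 1)) sums arcsin y"
proof -
  define f where "f x = (\<Sum>k. arcsin_series_coeff k * x ^ k) - arcsin x" for x :: real
  have "\<exists>c. \<forall>x\<in>{-1<..<1::real}. f x = c"
  proof (rule has_field_derivative_zero_constant)
    fix x :: real assume x: "x \<in> {-1<..<1}"
    have "(f has_real_derivative inverse (sqrt (1 - x\<^sup>2)) - inverse (sqrt (1 - x\<^sup>2))) (at x)"
      unfolding f_def using x
      by (intro derivative_intros arcsin_series_has_derivative DERIV_arcsin) auto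
    thus "(f has_real_derivative 0) (at x within {-1<..<1})"
      by (simp add: has_field_derivative_at_within)
  qed auto
  then obtain c where c: "\<And>x. x \<in> {-1<..<1::real} \<Longrightarrow> f x = c" by blast
  have "c = 0" using c[of 0] by (simp add: f_def arcsin_series_coeff_def)
  with c[of y] assms have "(\<Sum>k. arcsin_series_coeff k * y ^ k) = arcsin y"
    by (auto simp: f_def abs_less_iff)
  moreover have "summable (\<lambda>k. arcsin_series_coeff k * y ^ k)"
    using summable_sums[OF summable_arcsin_coeff_power[OF assms]] sums_arcsin_series_coeff_iff
    by (blast intro: sums_summable)
  ultimately have "(\<lambda>k. arcsin_series_coeff k * y ^ k) sums arcsin y"
    by (metis summable_sums)
  thus ?thesis by (simp only: sums_arcsin_series_coeff_iff)
qed

lemma sum_arcsin_coeff_le: "(\<Sum>n<K. arcsin_coeff n) \<le> pi / 2"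
proof -
  have lim: "((\<lambda>y::real. \<Sum>n<K. arcsin_coeff n * y ^ (2 * n + 1)) \<longlongrightarrow>
               (\<Sum>n<K. arcsin_coeff n * 1 ^ (2 * n + 1))) (at_left 1)"
    by (intro tendsto_intros)
  have "(\<Sum>n<K. arcsin_coeff n * y ^ (2 * n + 1)) \<le> pi / 2" if y: "y \<in> {0<..<1}" for y :: real
  proof -
    have "\<bar>y\<bar> < 1" using y by auto
    have "(\<Sum>n<K. arcsin_coeff n * y ^ (2 * n + 1)) \<le> (\<Sum>n. arcsin_coeff n * y ^ (2 * n + 1))"
      by (rule sum_le_suminf[OF summable_arcsin_coeff_power[OF \<open>\<bar>y\<bar> < 1\<close>]])
         (use y arcsin_coeff_nonneg in auto)
    also have "\<dots> = arcsin y"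
      using sums_arcsin[OF \<open>\<bar>y\<bar> < 1\<close>] by (rule sums_unique[symmetric])
    also have "\<dots> \<le> pi / 2" using y by (intro arcsin_ubound) auto
    finally show ?thesis .
  qed
  hence "\<forall>\<^sub>F y in at_left 1. (\<Sum>n<K. arcsin_coeff n * y ^ (2 * n + 1)) \<le> pi / 2"
    by (rule eventually_mono[OF eventually_at_left_real[OF zero_less_one]])
  from tendsto_le[OF _ tendsto_const lim this] show ?thesis by simp
qed

lemma summable_arcsin_coeff: "summable arcsin_coeff"
  by (rule summableI_nonneg_bounded[OF arcsin_coeff_nonneg sum_arcsin_coeff_le])

lemma suminf_arcsin_coeff_le: "suminf arcsin_coeff \<le> pi / 2"
  by (rule suminf_le_const[OF summable_arcsin_coeff sum_arcsin_coeff_le])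

lemma sums_arcsin_coeff_sin_power:
  fixes x :: real
  assumes "\<bar>x\<bar> < pi / 2"
  shows "(\<lambda>n. arcsin_coeff n * sin x ^ (2 * n + 1)) sums x"
proof -
  have "arcsin (sin x) = x" using assms by (intro arcsin_sin) auto
  with assms have "sin x \<noteq> 1" "sin x \<noteq> -1" by auto
  hence "\<bar>sin x\<bar> < 1" using sin_le_one[of x] sin_ge_minus_one[of x] by linarith
  with sums_arcsin[OF this] \<open>arcsin (sin x) = x\<close> show ?thesis by simp
qed

lemma of_real_sin_mult_cis: "of_real (sin a) * cis b = (cis (b + a) - cis (b - a)) / (2 * \<i>)"
proof -
  have "cis (b + a) - cis (b - a) = 2 * \<i> * (of_real (sin a) * cis b)"
    by (simp add: complex_eq_iff cos_add sin_add cos_diff sin_diff)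
  thus ?thesis by simp
qed

text \<open>Multiplying the coefficients by \<open>sin (l i * s)\<close> averages the shifts by \<open>\<plusminus>s\<close>,
  so it cannot increase the supremum over \<open>u\<close>.\<close>

lemma norm_exp_sum_sin_power_le:
  fixes b :: "'i \<Rightarrow> complex" and l :: "'i \<Rightarrow> real"
  assumes bound: "\<And>u. norm (\<Sum>i\<in>I. b i * cis (l i * u)) \<le> M"
  shows "norm (\<Sum>i\<in>I. b i * of_real (sin (l i * s) ^ m) * cis (l i * u)) \<le> M"
proof (induction m arbitrary: u)
  case 0
  then show ?case using bound by simp
next
  case (Suc m)
  define g where "g v = (\<Sum>i\<in>I. b i * of_real (sin (l i * s) ^ m) * cis (l i * v))" for v
  have shift: "b i * of_real (sin (l i * s) ^ Suc m) * cis (l i * u) =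
          (b i * of_real (sin (l i * s) ^ m) * cis (l i * (u + s)) -
           b i * of_real (sin (l i * s) ^ m) * cis (l i * (u - s))) / (2 * \<i>)" for i
  proof -
    have "b i * of_real (sin (l i * s) ^ Suc m) * cis (l i * u) =
            b i * of_real (sin (l i * s) ^ m) * (of_real (sin (l i * s)) * cis (l i * u))"
      by (simp add: mult_ac)
    also have "\<dots> = b i * of_real (sin (l i * s) ^ m) *
                      ((cis (l i * (u + s)) - cis (l i * (u - s))) / (2 * \<i>))"
      by (simp only: of_real_sin_mult_cis distrib_left right_diff_distrib)
    finally show ?thesis by (simp add: field_simps)
  qed
  have "(\<Sum>i\<in>I. b i * of_real (sin (l i * s) ^ Suc m) * cis (l i * u)) =
          (\<Sum>i\<in>I. (b i * of_real (sin (l i * s) ^ m) * cis (l i * (u + s)) -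
                     b i * of_real (sin (l i * s) ^ m) * cis (l i * (u - s))) / (2 * \<i>))"
    by (rule sum.cong[OF refl shift])
  also have "\<dots> = (g (u + s) - g (u - s)) / (2 * \<i>)"
    by (simp only: g_def sum_divide_distrib[symmetric] sum_subtractf)
  also have "norm \<dots> \<le> (norm (g (u + s)) + norm (g (u - s))) / 2"
    by (simp add: norm_divide norm_mult divide_right_mono norm_triangle_ineq4)
  also have "\<dots> \<le> M"
    using Suc[of "u + s"] Suc[of "u - s"] by (simp add: g_def)
  finally show ?case .
qed

lemma sums_ii_mult_arcsin_coeff:
  assumes "s > 0" and "\<bar>l * s\<bar> < pi / 2"
  shows "(\<lambda>n. \<i> * of_real (arcsin_coeff n / s) * of_real (sin (l * s) ^ (2 * n + 1))) sums (\<i> * of_real l)"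
proof -
  have "(\<lambda>n. of_real (arcsin_coeff n * sin (l * s) ^ (2 * n + 1))) sums (of_real (l * s) :: complex)"
    by (subst sums_of_real_iff) (rule sums_arcsin_coeff_sin_power[OF assms(2)])
  from sums_mult[OF this, of "\<i> / of_real s"] assms(1) show ?thesis
    by (simp add: mult_ac)
qed

text \<open>Expand each frequency with \<open>sums_ii_mult_arcsin_coeff\<close> at \<open>s = pi / (2 * L)\<close>: every term
  is bounded by \<open>norm_exp_sum_sin_power_le\<close>, and the weights \<open>arcsin_coeff n / s\<close> sum to at
  most \<open>L\<close>.\<close>

lemma bernstein_exp_sum_strict:
  fixes b :: "'i \<Rightarrow> complex" and l :: "'i \<Rightarrow> real"
  assumes "L > 0" and freq: "\<And>i. i \<in> I \<Longrightarrow> \<bar>l i\<bar> < L"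
    and bound: "\<And>u. norm (\<Sum>i\<in>I. b i * cis (l i * u)) \<le> M"
  shows "norm (\<Sum>i\<in>I. b i * (\<i> * of_real (l i)) * cis (l i * u)) \<le> L * M"
proof -
  define s where "s = pi / (2 * L)"
  have "s > 0" using \<open>L > 0\<close> by (simp add: s_def)
  have "M \<ge> 0" using bound[of 0] norm_ge_zero order.trans by blast
  define f where
    "f n i = (\<i> * of_real (arcsin_coeff n / s)) * (b i * of_real (sin (l i * s) ^ (2 * n + 1)) * cis (l i * u))"
    for n i
  have "(\<lambda>n. f n i) sums (b i * (\<i> * of_real (l i)) * cis (l i * u))" if "i \<in> I" for i
  proof -
    have "\<bar>l i * s\<bar> = \<bar>l i\<bar> * s" using \<open>s > 0\<close> by (simp add: abs_mult)
    also have "\<dots> < L * s" using freq[OF that] \<open>s > 0\<close> by (intro mult_strict_right_mono)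
    also have "L * s = pi / 2" using \<open>L > 0\<close> by (simp add: s_def)
    finally have "\<bar>l i * s\<bar> < pi / 2" .
    from sums_mult2[OF sums_ii_mult_arcsin_coeff[OF \<open>s > 0\<close> this], of "b i * cis (l i * u)"]
    show ?thesis by (simp add: f_def mult_ac)
  qed
  hence "(\<lambda>n. \<Sum>i\<in>I. f n i) sums (\<Sum>i\<in>I. b i * (\<i> * of_real (l i)) * cis (l i * u))"
    by (rule sums_sum)
  moreover have "(\<lambda>n. arcsin_coeff n * (M / s)) sums (suminf arcsin_coeff * (M / s))"
    by (intro sums_mult2 summable_sums summable_arcsin_coeff)
  moreover have "norm (\<Sum>i\<in>I. f n i) \<le> arcsin_coeff n * (M / s)" for n
  proof -
    have "norm (\<i> * of_real (arcsin_coeff n / s)) = arcsin_coeff n / s"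
      using arcsin_coeff_nonneg[of n] \<open>s > 0\<close> by (simp only: norm_mult norm_ii norm_of_real) simp
    hence "norm (\<Sum>i\<in>I. f n i) =
            arcsin_coeff n / s * norm (\<Sum>i\<in>I. b i * of_real (sin (l i * s) ^ (2 * n + 1)) * cis (l i * u))"
      unfolding f_def sum_distrib_left[symmetric] norm_mult[of "\<i> * _"] by simp
    also have "\<dots> \<le> arcsin_coeff n / s * M"
      using arcsin_coeff_nonneg[of n] \<open>s > 0\<close>
      by (intro mult_left_mono norm_exp_sum_sin_power_le[OF bound]) auto
    finally show ?thesis by simp
  qed
  ultimately have "norm (\<Sum>i\<in>I. b i * (\<i> * of_real (l i)) * cis (l i * u)) \<le> suminf arcsin_coeff * (M / s)"
    by (rule norm_sums_le)
  also have "\<dots> \<le> pi / 2 * (M / s)"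
    using suminf_arcsin_coeff_le \<open>s > 0\<close> \<open>M \<ge> 0\<close> by (intro mult_right_mono) auto
  also have "\<dots> = L * M" using \<open>L > 0\<close> by (simp add: s_def)
  finally show ?thesis .
qed

lemma bernstein_exp_sum:
  fixes b :: "'i \<Rightarrow> complex" and l :: "'i \<Rightarrow> real"
  assumes "L \<ge> 0" and freq: "\<And>i. i \<in> I \<Longrightarrow> \<bar>l i\<bar> \<le> L"
    and bound: "\<And>u. norm (\<Sum>i\<in>I. b i * cis (l i * u)) \<le> M"
  shows "norm (\<Sum>i\<in>I. b i * (\<i> * of_real (l i)) * cis (l i * u)) \<le> L * M"
proof (rule field_le_epsilon)
  fix e :: real assume "e > 0"
  have "M \<ge> 0" using bound[of 0] norm_ge_zero order.trans by blast
  define L' where "L' = L + e / (M + 1)"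
  have "L' > L" using \<open>e > 0\<close> \<open>M \<ge> 0\<close> by (simp add: L'_def)
  have "norm (\<Sum>i\<in>I. b i * (\<i> * of_real (l i)) * cis (l i * u)) \<le> L' * M"
    using \<open>L' > L\<close> \<open>L \<ge> 0\<close> freq
    by (intro bernstein_exp_sum_strict[OF _ _ bound]) (auto intro: le_less_trans)
  also have "L' * M = L * M + e * (M / (M + 1))"
    using \<open>M \<ge> 0\<close> by (simp add: L'_def field_simps)
  also have "\<dots> \<le> L * M + e * 1"
    using \<open>M \<ge> 0\<close> \<open>e > 0\<close> by (intro add_left_mono mult_left_mono) auto
  finally show "norm (\<Sum>i\<in>I. b i * (\<i> * of_real (l i)) * cis (l i * u)) \<le> L * M + e"
    by simp
qed

lemma norm_exp_sum_diff_le: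
  fixes b :: "'i \<Rightarrow> complex" and l :: "'i \<Rightarrow> real"
  assumes "L \<ge> 0" and freq: "\<And>i. i \<in> I \<Longrightarrow> \<bar>l i\<bar> \<le> L"
    and bound: "\<And>u. norm (\<Sum>i\<in>I. b i * cis (l i * u)) \<le> M"
  shows "norm ((\<Sum>i\<in>I. b i * cis (l i)) - (\<Sum>i\<in>I. b i)) \<le> L * M"
proof -
  define g where "g z = (\<Sum>i\<in>I. b i * exp (\<i> * of_real (l i) * z))" for z :: complex
  define g' where "g' z = (\<Sum>i\<in>I. b i * (\<i> * of_real (l i)) * exp (\<i> * of_real (l i) * z))" for z :: complex
  have "norm (g 1 - g 0) \<le> (L * M) * norm (1 - 0 :: complex)"
  proof (rule field_differentiable_bound[OF convex_closed_segment])
    fix z assume "z \<in> closed_segment 0 (1::complex)"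
    show "(g has_field_derivative g' z) (at z within closed_segment 0 1)"
      unfolding g_def g'_def
      by (rule has_field_derivative_at_within) (auto intro!: derivative_eq_intros sum.cong simp: mult_ac)
    from \<open>z \<in> closed_segment 0 1\<close> obtain u :: real where "z = of_real u"
      by (auto simp: closed_segment_def scaleR_conv_of_real)
    hence "g' z = (\<Sum>i\<in>I. b i * (\<i> * of_real (l i)) * cis (l i * u))"
      by (simp add: g'_def cis_conv_exp mult_ac)
    thus "norm (g' z) \<le> L * M" using bernstein_exp_sum[OF assms] by simp
  qed auto
  thus ?thesis by (simp add: g_def cis_conv_exp mult_ac)
qed

lemma finite_primes_upto: "finite (primes_upto N)"
  unfolding primes_upto_def by auto

lemma prime_factors_subset_primes_upto:
  "n \<in> {1..N} \<Longrightarrow> prime_factors n \<subseteq> primes_upto N"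
  unfolding primes_upto_def
  by (auto intro: order.trans[OF dvd_imp_le] simp: in_prime_factors_iff)

lemma prod_cis: "(\<Prod>i\<in>I. cis (f i)) = cis (\<Sum>i\<in>I. f i)"
  by (induction I rule: infinite_finite_induct) (auto simp: cis_mult)

lemma ln_eq_sum_multiplicity_ln_prime:
  assumes "n > 0"
  shows "ln (real n) = (\<Sum>p\<in>prime_factors n. real (multiplicity p n) * ln (real p))"
proof -
  have "real n = real (\<Prod>p\<in>prime_factors n. p ^ multiplicity p n)"
    using arg_cong[OF prime_factorization_nat[OF assms], of real] .
  also have "\<dots> = (\<Prod>p\<in>prime_factors n. real p ^ multiplicity p n)"
    by (simp add: of_nat_prod)
  also have "ln \<dots> = (\<Sum>p\<in>prime_factors n. ln (real p ^ multiplicity p n))"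
    by (rule ln_prod) (auto simp: in_prime_factors_iff)
  finally show ?thesis
    by (simp add: ln_realpow prime_gt_0_nat in_prime_factors_iff)
qed

definition monomial_freq :: "(nat \<Rightarrow> real) \<Rightarrow> nat \<Rightarrow> real" where
  "monomial_freq t n = (\<Sum>p\<in>prime_factors n. real (multiplicity p n) * t p)"

definition torus_rotate :: "nat set \<Rightarrow> (nat \<Rightarrow> complex) \<Rightarrow> (nat \<Rightarrow> real) \<Rightarrow> real \<Rightarrow> nat \<Rightarrow> complex" where
  "torus_rotate P z t u = (\<lambda>p. if p \<in> P then z p * cis (u * t p) else undefined)"

lemma torus_rotate_in_torus: "z \<in> torus P \<Longrightarrow> torus_rotate P z t u \<in> torus P"
  unfolding torus_def torus_rotate_def by (auto simp: PiE_iff norm_mult extensional_def)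

lemma zmon_torus_rotate:
  assumes "n \<in> {1..N}"
  shows "zmon (torus_rotate (primes_upto N) z t u) n = zmon z n * cis (monomial_freq t n * u)"
proof -
  have "zmon (torus_rotate (primes_upto N) z t u) n =
          (\<Prod>p\<in>prime_factors n. (z p * cis (u * t p)) ^ multiplicity p n)"
    unfolding zmon_def torus_rotate_def
    using prime_factors_subset_primes_upto[OF assms] by (intro prod.cong) auto
  also have "\<dots> = zmon z n * (\<Prod>p\<in>prime_factors n. cis (u * t p) ^ multiplicity p n)"
    unfolding zmon_def by (simp add: power_mult_distrib prod.distrib)
  also have "(\<Prod>p\<in>prime_factors n. cis (u * t p) ^ multiplicity p n) =
               (\<Prod>p\<in>prime_factors n. cis (real (multiplicity p n) * (u * t p)))"
    by (intro prod.cong refl) (rule Complex.DeMoivre)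
  also have "\<dots> = cis (monomial_freq t n * u)"
    unfolding prod_cis monomial_freq_def sum_distrib_right by (simp add: mult_ac)
  finally show ?thesis .
qed

lemma dirichlet_poly_torus_rotate:
  "dirichlet_poly N a (torus_rotate (primes_upto N) z t u) =
     (\<Sum>n\<in>{1..N}. (a n * zmon z n) * cis (monomial_freq t n * u))"
  unfolding dirichlet_poly_def by (intro sum.cong refl) (simp add: zmon_torus_rotate mult.assoc)

lemma abs_monomial_freq_le:
  assumes "n > 0" and "c \<ge> 0" and t: "\<And>p. p \<in> prime_factors n \<Longrightarrow> \<bar>t p\<bar> \<le> c * ln (real p)"
  shows "\<bar>monomial_freq t n\<bar> \<le> c * ln (real n)"
proof -
  have "\<bar>monomial_freq t n\<bar> \<le> (\<Sum>p\<in>prime_factors n. real (multiplicity p n) * \<bar>t p\<bar>)"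
    unfolding monomial_freq_def by (rule order.trans[OF sum_abs]) (simp add: abs_mult)
  also have "\<dots> \<le> (\<Sum>p\<in>prime_factors n. real (multiplicity p n) * (c * ln (real p)))"
    using t by (intro sum_mono mult_left_mono) auto
  also have "\<dots> = c * ln (real n)"
    using \<open>n > 0\<close> by (simp add: ln_eq_sum_multiplicity_ln_prime sum_distrib_left mult_ac)
  finally show ?thesis .
qed

definition circle_arc :: "complex \<Rightarrow> real \<Rightarrow> complex set" where
  "circle_arc z d = (\<lambda>\<theta>. z * cis \<theta>) ` {-d..d}"

lemma in_PiE_circle_arcE:
  assumes "z \<in> PiE P (\<lambda>p. circle_arc (z0 p) (d p))"
  obtains t where "\<And>p. p \<in> P \<Longrightarrow> \<bar>t p\<bar> \<le> d p" and "z = torus_rotate P z0 t 1"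
proof -
  have "\<forall>p\<in>P. \<exists>\<theta>. \<bar>\<theta>\<bar> \<le> d p \<and> z p = z0 p * cis \<theta>"
    using assms by (force simp: PiE_iff circle_arc_def abs_le_iff)
  then obtain t where t: "\<And>p. p \<in> P \<Longrightarrow> \<bar>t p\<bar> \<le> d p \<and> z p = z0 p * cis (t p)"
    by metis
  moreover have "z = torus_rotate P z0 t 1"
    using assms t by (auto simp: torus_rotate_def PiE_iff extensional_def)
  ultimately show ?thesis using that by blast
qed

lemma dirichlet_poly_ge_near_maximum:
  assumes "N \<ge> 2" and "lam \<le> 1"
    and z0: "z0 \<in> torus (primes_upto N)"
    and max: "\<And>w. w \<in> torus (primes_upto N) \<Longrightarrow> norm (dirichlet_poly N a w) \<le> norm (dirichlet_poly N a z0)"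
    and z: "z \<in> PiE (primes_upto N) (\<lambda>p. circle_arc (z0 p) ((1 - lam) * ln (real p) / ln (real N)))"
  shows "lam * norm (dirichlet_poly N a z0) \<le> norm (dirichlet_poly N a z)"
proof -
  define M where "M = norm (dirichlet_poly N a z0)"
  obtain t where t: "\<And>p. p \<in> primes_upto N \<Longrightarrow> \<bar>t p\<bar> \<le> (1 - lam) * ln (real p) / ln (real N)"
    and z_eq: "z = torus_rotate (primes_upto N) z0 t 1"
    using in_PiE_circle_arcE[OF z] by blast
  have freq: "\<bar>monomial_freq t n\<bar> \<le> 1 - lam" if "n \<in> {1..N}" for n
  proof -
    have "\<bar>monomial_freq t n\<bar> \<le> (1 - lam) / ln (real N) * ln (real n)"
      using that \<open>lam \<le> 1\<close> prime_factors_subset_primes_upto[OF that] t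
      by (intro abs_monomial_freq_le) auto
    also have "\<dots> \<le> (1 - lam) / ln (real N) * ln (real N)"
      using that \<open>lam \<le> 1\<close> by (intro mult_left_mono) auto
    also have "\<dots> = 1 - lam" using \<open>N \<ge> 2\<close> by simp
    finally show ?thesis .
  qed
  have "norm ((\<Sum>n\<in>{1..N}. (a n * zmon z0 n) * cis (monomial_freq t n)) - (\<Sum>n\<in>{1..N}. a n * zmon z0 n))
          \<le> (1 - lam) * M"
  proof (rule norm_exp_sum_diff_le[OF _ freq])
    show "norm (\<Sum>n\<in>{1..N}. (a n * zmon z0 n) * cis (monomial_freq t n * u)) \<le> M" for u
      using max[OF torus_rotate_in_torus[OF z0, of t u]]
      by (simp add: M_def dirichlet_poly_torus_rotate)
  qed (use \<open>lam \<le> 1\<close> in auto)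
  moreover have "(\<Sum>n\<in>{1..N}. (a n * zmon z0 n) * cis (monomial_freq t n)) = dirichlet_poly N a z"
    using dirichlet_poly_torus_rotate[of N a z0 t 1] by (simp add: z_eq)
  ultimately have "norm (dirichlet_poly N a z - dirichlet_poly N a z0) \<le> (1 - lam) * M"
    by (simp add: dirichlet_poly_def)
  moreover have "M - norm (dirichlet_poly N a z) \<le> norm (dirichlet_poly N a z - dirichlet_poly N a z0)"
    unfolding M_def by (metis norm_minus_commute norm_triangle_ineq2)
  ultimately show ?thesis by (simp add: M_def algebra_simps)
qed

lemma circle_arc_subset_sphere: "norm z = 1 \<Longrightarrow> circle_arc z d \<subseteq> sphere 0 1"
  by (auto simp: circle_arc_def norm_mult)

lemma PiE_circle_arc_subset_superlevel_set:
  assumes "N \<ge> 2" and "lam \<le> 1"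
    and z0: "z0 \<in> torus (primes_upto N)"
    and max: "\<And>w. w \<in> torus (primes_upto N) \<Longrightarrow> norm (dirichlet_poly N a w) \<le> norm (dirichlet_poly N a z0)"
  shows "PiE (primes_upto N) (\<lambda>p. circle_arc (z0 p) ((1 - lam) * ln (real p) / ln (real N)))
           \<subseteq> {z \<in> torus (primes_upto N). lam * norm (dirichlet_poly N a z0) \<le> norm (dirichlet_poly N a z)}"
proof
  fix z assume z: "z \<in> PiE (primes_upto N) (\<lambda>p. circle_arc (z0 p) ((1 - lam) * ln (real p) / ln (real N)))"
  have "norm (z0 p) = 1" if "p \<in> primes_upto N" for p
    using z0 that by (auto simp: torus_def PiE_iff)
  hence "z \<in> torus (primes_upto N)"
    using z circle_arc_subset_sphere by (fastforce simp: torus_def PiE_iff)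
  moreover have "lam * norm (dirichlet_poly N a z0) \<le> norm (dirichlet_poly N a z)"
    by (rule dirichlet_poly_ge_near_maximum[OF assms z])
  ultimately show "z \<in> {z \<in> torus (primes_upto N). lam * norm (dirichlet_poly N a z0) \<le> norm (dirichlet_poly N a z)}"
    by simp
qed

lemma measurable_cis_2pi: "(\<lambda>t. cis (2 * pi * t)) \<in> borel_measurable (restrict_space lborel {0..1::real})"
proof -
  have "(\<lambda>t::real. cis (2 * pi * t)) \<in> borel_measurable borel"
    by (intro borel_measurable_continuous_onI continuous_intros)
  thus ?thesis by (intro measurable_restrict_space1) simp
qed

lemma sets_circle_measure [simp]: "sets circle_measure = sets borel"
  by (simp add: circle_measure_def)

lemma prob_space_circle_measure: "prob_space circle_measure"
  unfolding circle_measure_def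
  by (intro prob_space.prob_space_distr measurable_cis_2pi prob_space_restrict_space) auto

lemma measure_circle_measure:
  assumes "A \<in> sets borel"
  shows "{t\<in>{0..1}. cis (2 * pi * t) \<in> A} \<in> sets lborel"
    and "measure circle_measure A = measure lborel {t\<in>{0..1}. cis (2 * pi * t) \<in> A}"
proof -
  have preimage: "(\<lambda>t. cis (2 * pi * t)) -` A \<inter> space (restrict_space lborel {0..1}) =
                  {t\<in>{0..1}. cis (2 * pi * t) \<in> A}"
    by (auto simp: space_restrict_space)
  have "{t\<in>{0..1}. cis (2 * pi * t) \<in> A} \<in> sets (restrict_space lborel {0..1})"
    using measurable_sets[OF measurable_cis_2pi assms] by (simp only: preimage)
  thus "{t\<in>{0..1}. cis (2 * pi * t) \<in> A} \<in> sets lborel"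
    by (subst (asm) sets_restrict_space_iff) auto
  have "measure circle_measure A =
          measure (restrict_space lborel {0..1}) ((\<lambda>t. cis (2 * pi * t)) -` A \<inter> space (restrict_space lborel {0..1}))"
    unfolding circle_measure_def by (rule measure_distr[OF measurable_cis_2pi assms])
  also have "\<dots> = measure lborel {t\<in>{0..1}. cis (2 * pi * t) \<in> A}"
    unfolding preimage by (rule measure_restrict_space) auto
  finally show "measure circle_measure A = measure lborel {t\<in>{0..1}. cis (2 * pi * t) \<in> A}" .
qed

lemma measure_interval_mod_1_ge:
  fixes S :: "real set"
  assumes "S \<in> sets lborel" and "S \<subseteq> {0..1}" and "-1/2 < a" "a \<le> 1/2" and "0 \<le> e" "e < 1/2"
    and near: "{t\<in>{0..1}. \<bar>t - a\<bar> \<le> e \<or> \<bar>t - (a + 1)\<bar> \<le> e} \<subseteq> S"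
  shows "2 * e \<le> measure lborel S"
proof -
  have fin: "T \<in> fmeasurable lborel" if "T \<in> sets lborel" "T \<subseteq> {0..1}" for T :: "real set"
    using fmeasurableI2[of "{0..1}" lborel T] that by (simp add: fmeasurableI)
  have mono: "measure lborel T \<le> measure lborel S" if "T \<subseteq> S" "T \<in> sets lborel" for T
    by (rule measure_mono_fmeasurable[OF that fin[OF assms(1,2)]])
  consider "e \<le> a" | "-e \<le> a" "a < e" | "a < -e" by linarith
  then show ?thesis
  proof cases
    case 1
    have "{a - e..a + e} \<subseteq> S"
      using 1 assms(4,6) by (intro order.trans[OF _ near]) (auto simp: abs_le_iff)
    from mono[OF this] show ?thesis using \<open>0 \<le> e\<close> by simp
  next
    case 2
    define T where "T = {0..a + e} \<union> {a + 1 - e..1}"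
    have "T \<subseteq> S"
      using 2 assms(3,6) unfolding T_def by (intro order.trans[OF _ near]) (auto simp: abs_le_iff)
    have "measure lborel T = measure lborel {0..a + e} + measure lborel ({a + 1 - e..1} - {0..a + e})"
      unfolding T_def using 2 assms(3,4,6) by (intro measure_Un2 fin) auto
    also have "{a + 1 - e..1} - {0..a + e} = {a + 1 - e..1}" using \<open>e < 1/2\<close> by auto
    finally have "measure lborel T = 2 * e" using 2 by simp
    with mono[OF \<open>T \<subseteq> S\<close>] show ?thesis by (simp add: T_def)
  next
    case 3
    have "{a + 1 - e..a + 1 + e} \<subseteq> S"
      using 3 assms(3,6) by (intro order.trans[OF _ near]) (auto simp: abs_le_iff)
    from mono[OF this] show ?thesis using \<open>0 \<le> e\<close> by simp
  qed
qed

lemma circle_arc_in_sets_borel: "circle_arc z d \<in> sets borel"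
  unfolding circle_arc_def
  by (intro borel_compact compact_continuous_image continuous_intros) auto

lemma measure_circle_arc_ge:
  assumes "norm z = 1" and "0 \<le> d" "d < pi"
  shows "d / pi \<le> measure circle_measure (circle_arc z d)"
proof -
  define S where "S = {t\<in>{0..1}. cis (2 * pi * t) \<in> circle_arc z d}"
  define a where "a = Arg z / (2 * pi)"
  define e where "e = d / (2 * pi)"
  have "z \<noteq> 0" using assms by auto
  hence z_eq: "z = cis (2 * pi * a)"
    using cis_Arg[of z] assms by (simp add: a_def sgn_div_norm)
  have a: "-1/2 < a" "a \<le> 1/2"
    using Arg_bounded[of z] pi_gt_zero by (auto simp: a_def field_simps)
  have e: "0 \<le> e" "e < 1/2"
    using assms pi_gt_zero by (auto simp: e_def field_simps)
  have S: "S \<in> sets lborel" "S \<subseteq> {0..1}"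
    using measure_circle_measure(1)[OF circle_arc_in_sets_borel] by (auto simp: S_def)
  have "{t\<in>{0..1}. \<bar>t - a\<bar> \<le> e \<or> \<bar>t - (a + 1)\<bar> \<le> e} \<subseteq> S"
  proof
    fix t assume "t \<in> {t\<in>{0..1}. \<bar>t - a\<bar> \<le> e \<or> \<bar>t - (a + 1)\<bar> \<le> e}"
    hence t: "t \<in> {0..1}" and near: "\<bar>t - a\<bar> \<le> e \<or> \<bar>t - (a + 1)\<bar> \<le> e" by auto
    obtain k :: int where k: "\<bar>t - (a + k)\<bar> \<le> e"
    proof (cases "\<bar>t - a\<bar> \<le> e")
      case True
      thus ?thesis using that[of 0] by simp
    next
      case False
      thus ?thesis using that[of 1] near by simp
    qed
    have "\<bar>2 * pi * (t - (a + k))\<bar> = 2 * pi * \<bar>t - (a + k)\<bar>"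
      by (simp add: abs_mult)
    also have "\<dots> \<le> 2 * pi * e" using k by simp
    finally have "\<bar>2 * pi * (t - (a + k))\<bar> \<le> d" by (simp add: e_def)
    moreover have "z * cis (2 * pi * (t - (a + k))) = cis (2 * pi * t) / cis (2 * pi * of_int k)"
      by (simp add: z_eq cis_mult cis_divide algebra_simps)
    hence "cis (2 * pi * t) = z * cis (2 * pi * (t - (a + k)))" by simp
    ultimately show "t \<in> S"
      using t by (auto simp: S_def circle_arc_def abs_le_iff)
  qed
  from measure_interval_mod_1_ge[OF S a e this] have "2 * e \<le> measure lborel S" .
  thus ?thesis
    using measure_circle_measure(2)[OF circle_arc_in_sets_borel] by (simp add: S_def e_def)
qed

lemma measure_torus_measure_PiE:
  assumes "finite P" and "\<And>p. p \<in> P \<Longrightarrow> A p \<in> sets borel"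
  shows "measure (torus_measure P) (PiE P A) = (\<Prod>p\<in>P. measure circle_measure (A p))"
proof -
  interpret product_prob_space "\<lambda>_. circle_measure" P
    by (intro product_prob_spaceI prob_space_circle_measure)
  have "emeasure (torus_measure P) (PiE P A) = (\<Prod>p\<in>P. emeasure circle_measure (A p))"
    unfolding torus_measure_def using assms by (intro emeasure_PiM) auto
  also have "\<dots> = (\<Prod>p\<in>P. ennreal (measure circle_measure (A p)))"
    using prob_space_circle_measure by (simp add: prob_space_def finite_measure.emeasure_eq_measure)
  also have "\<dots> = ennreal (\<Prod>p\<in>P. measure circle_measure (A p))"
    by (rule prod_ennreal) simp
  finally show ?thesis
    by (simp add: measure_def prod_nonneg)
qed

lemma superlevel_set_in_sets_torus_measure:
  "{z \<in> torus (primes_upto N). c \<le> cmod (dirichlet_poly N a z)} \<in> sets (torus_measure (primes_upto N))"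
proof -
  define M where "M = torus_measure (primes_upto N)"
  have "(\<lambda>z. z p) \<in> borel_measurable M" if "p \<in> primes_upto N" for p
  proof -
    have "(\<lambda>z. z p) \<in> measurable M circle_measure"
      unfolding M_def torus_measure_def by (rule measurable_component_singleton[OF that])
    thus ?thesis by (subst measurable_cong_sets[OF refl, of _ circle_measure]) simp_all
  qed
  hence [measurable]: "dirichlet_poly N a \<in> borel_measurable M"
    unfolding dirichlet_poly_def zmon_def using prime_factors_subset_primes_upto
    by (intro borel_measurable_sum borel_measurable_times borel_measurable_const
          borel_measurable_prod borel_measurable_power) blast+
  have torus: "torus (primes_upto N) \<in> sets M"
    unfolding M_def torus_def torus_measure_def using finite_primes_upto
    by (intro sets_PiM_I_finite) auto
  have "{z \<in> space M. c \<le> cmod (dirichlet_poly N a z)} \<in> sets M"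
    by measurable
  with torus have "torus (primes_upto N) \<inter> {z \<in> space M. c \<le> cmod (dirichlet_poly N a z)} \<in> sets M"
    by (rule sets.Int)
  also have "torus (primes_upto N) \<inter> {z \<in> space M. c \<le> cmod (dirichlet_poly N a z)} =
               {z \<in> torus (primes_upto N). c \<le> cmod (dirichlet_poly N a z)}"
    using sets.sets_into_space[OF torus] by auto
  finally show ?thesis by (simp add: M_def)
qed

lemma compact_torus: "compact (torus P)"
proof -
  have "torus P = PiE UNIV (\<lambda>p. if p \<in> P then sphere (0::complex) 1 else {undefined})"
    unfolding torus_def by (auto simp: PiE_iff extensional_def split: if_splits)
  moreover have "compactin (product_topology (\<lambda>_. euclidean) UNIV)
                   (PiE UNIV (\<lambda>p. if p \<in> P then sphere (0::complex) 1 else {undefined}))"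
    by (subst compactin_PiE) auto
  ultimately show ?thesis by (simp add: euclidean_product_topology)
qed

lemma dirichlet_poly_attains_max:
  obtains z0 where "z0 \<in> torus P"
    and "\<And>w. w \<in> torus P \<Longrightarrow> cmod (dirichlet_poly N a w) \<le> cmod (dirichlet_poly N a z0)"
proof -
  have "(\<lambda>p. if p \<in> P then 1 else undefined) \<in> torus P"
    unfolding torus_def by (auto simp: PiE_iff extensional_def)
  moreover have "continuous_on (torus P) (\<lambda>z. cmod (dirichlet_poly N a z))"
    unfolding dirichlet_poly_def zmon_def
    by (intro continuous_intros continuous_on_subset[OF continuous_on_product_coordinates]) auto
  ultimately show ?thesis
    using continuous_attains_sup[OF compact_torus] that by blast
qed

lemma prob_space_torus_measure: "prob_space (torus_measure P)"
  unfolding torus_measure_def by (intro prob_space_PiM prob_space_circle_measure)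

lemma ln_prime_div_ln_bounds:
  assumes "p \<in> primes_upto N"
  shows "0 < ln (real p) / ln (real N)" and "ln (real p) / ln (real N) \<le> 1"
proof -
  have "2 \<le> p" "p \<le> N" using assms by (auto simp: primes_upto_def prime_ge_2_nat)
  thus "0 < ln (real p) / ln (real N)" "ln (real p) / ln (real N) \<le> 1"
    by (auto simp: divide_le_eq_1)
qed

lemma measure_superlevel_set_ge_prod:
  assumes "N \<ge> 2" and "0 \<le> lam" "lam \<le> 1"
  shows "(\<Prod>p\<in>primes_upto N. (1 - lam) * ln (real p) / ln (real N) / pi)
           \<le> measure (torus_measure (primes_upto N))
               {z \<in> torus (primes_upto N).
                  lam * (SUP w\<in>torus (primes_upto N). cmod (dirichlet_poly N a w)) \<le> cmod (dirichlet_poly N a z)}"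
proof -
  define P where "P = primes_upto N"
  define d where "d p = (1 - lam) * ln (real p) / ln (real N)" for p
  obtain z0 where z0: "z0 \<in> torus P"
    and max: "\<And>w. w \<in> torus P \<Longrightarrow> cmod (dirichlet_poly N a w) \<le> cmod (dirichlet_poly N a z0)"
    using dirichlet_poly_attains_max[of P N a] by blast
  have norm_z0: "norm (z0 p) = 1" if "p \<in> P" for p
    using z0 that by (auto simp: torus_def PiE_iff)
  have d: "0 \<le> d p" "d p < pi" if "p \<in> P" for p
  proof -
    have dp: "d p = (1 - lam) * (ln (real p) / ln (real N))" by (simp add: d_def)
    show "0 \<le> d p"
      unfolding dp using ln_prime_div_ln_bounds(1)[of p N] that assms
      by (intro mult_nonneg_nonneg) (auto simp: P_def)
    have "d p \<le> 1"
      unfolding dp using ln_prime_div_ln_bounds[of p N] that assms by (intro mult_le_one) (auto simp: P_def)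
    thus "d p < pi" using pi_gt3 by linarith
  qed
  define box where "box = PiE P (\<lambda>p. circle_arc (z0 p) (d p))"
  have "(\<Prod>p\<in>P. d p / pi) \<le> (\<Prod>p\<in>P. measure circle_measure (circle_arc (z0 p) (d p)))"
    using d norm_z0 by (intro prod_mono conjI divide_nonneg_pos measure_circle_arc_ge) auto
  also have "\<dots> = measure (torus_measure P) box"
    unfolding box_def P_def by (intro measure_torus_measure_PiE[symmetric] finite_primes_upto circle_arc_in_sets_borel)
  also have "\<dots> \<le> measure (torus_measure P)
                  {z \<in> torus P. lam * cmod (dirichlet_poly N a z0) \<le> cmod (dirichlet_poly N a z)}"
  proof (rule finite_measure.finite_measure_mono)
    show "finite_measure (torus_measure P)"
      using prob_space_torus_measure by (rule prob_space.finite_measure)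
    show "box \<subseteq> {z \<in> torus P. lam * cmod (dirichlet_poly N a z0) \<le> cmod (dirichlet_poly N a z)}"
      unfolding box_def d_def P_def
      using PiE_circle_arc_subset_superlevel_set[OF \<open>N \<ge> 2\<close> \<open>lam \<le> 1\<close>] z0 max by (simp add: P_def)
  qed (simp add: P_def superlevel_set_in_sets_torus_measure)
  also have "(SUP w\<in>torus P. cmod (dirichlet_poly N a w)) = cmod (dirichlet_poly N a z0)"
    using z0 max by (intro cSup_eq_maximum) auto
  ultimately show ?thesis by (simp add: P_def d_def)
qed

lemma ln_half_le_exp_sixth:
  fixes x :: real
  assumes "x > 0"
  shows "ln (x / 2) \<le> exp (x / 6)"
proof -
  have "ln (x / 2) \<le> x / 2 - 1" using assms by (intro ln_le_minus_one) auto
  also have "\<dots> \<le> 1 + x / 6 + (x / 6)\<^sup>2 / 2"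
    using zero_le_power2[of "x - 12"] by (simp add: power2_eq_square field_simps)
  also have "\<dots> \<le> exp (x / 6)" using assms by (intro exp_lower_Taylor_quadratic) auto
  finally show ?thesis .
qed

lemma card_primes_upto_less_le:
  fixes x :: real
  assumes "x \<ge> 0"
  shows "real (card {p \<in> primes_upto N. real p < x}) \<le> x"
proof -
  have "{p \<in> primes_upto N. real p < x} \<subseteq> {1..nat \<lfloor>x\<rfloor>}"
    by (auto simp: primes_upto_def le_nat_iff le_floor_iff prime_gt_0_nat Suc_le_eq)
  hence "card {p \<in> primes_upto N. real p < x} \<le> nat \<lfloor>x\<rfloor>"
    using card_mono[of "{1..nat \<lfloor>x\<rfloor>}"] by fastforce
  thus ?thesis using assms by linarith
qed

lemma pi_ln_prime_div_ln_ge: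
  assumes "p \<in> primes_upto N" and "N \<ge> 2"
  shows "(if real p < real N powr (1/3) then min 1 (2 / ln (real N)) else 1)
           \<le> pi * ln (real p) / ln (real N)"
proof (cases "real p < real N powr (1/3)")
  case True
  have "3 * (2 / 3) \<le> pi * ln 2" using pi_gt3 ln2_ge_two_thirds by (intro mult_mono) auto
  also have "\<dots> \<le> pi * ln (real p)"
    using assms prime_ge_2_nat[of p] by (simp add: primes_upto_def)
  finally show ?thesis
    using True assms by (simp add: min_le_iff_disj divide_right_mono)
next
  case False
  hence "ln (real N powr (1/3)) \<le> ln (real p)" using assms by (intro ln_mono) auto
  moreover have "ln (real N powr (1/3)) = ln (real N) / 3" using assms by (simp add: ln_powr)
  ultimately have "3 * (ln (real N) / 3) \<le> pi * ln (real p)"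
    using pi_gt3 assms by (intro mult_mono) auto
  thus ?thesis using False assms by (simp add: field_simps)
qed

text \<open>Primes \<open>p \<ge> N powr (1/3)\<close> contribute factors \<open>\<ge> pi/3 > 1\<close>; each of the at most
  \<open>N powr (1/3)\<close> smaller primes contributes at least \<open>min 1 (2 / ln N)\<close>,
  since \<open>pi * ln 2 \<ge> 2\<close>.\<close>

lemma prod_pi_ln_div_ln_ge:
  assumes "N \<ge> 2"
  shows "exp (- sqrt (real N)) \<le> (\<Prod>p\<in>primes_upto N. pi * ln (real p) / ln (real N))"
proof -
  define L where "L = ln (real N)"
  define x where "x = real N powr (1/3)"
  define c where "c = min 1 (2 / L)"
  define S where "S = {p \<in> primes_upto N. real p < x}"
  have "L > 0" "x > 0" "0 < c" "c \<le> 1"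
    using assms by (auto simp: L_def x_def c_def)
  have factor: "(if p \<in> S then c else 1) \<le> pi * ln (real p) / L" if "p \<in> primes_upto N" for p
    using pi_ln_prime_div_ln_ge[OF that assms] that by (auto simp: S_def c_def x_def L_def split: if_splits)
  have "- exp (L / 6) \<le> ln c"
  proof (cases "c = 1")
    case False
    hence "c = 2 / L" "L > 2" using \<open>L > 0\<close> by (auto simp: c_def min_def field_simps split: if_splits)
    thus ?thesis using ln_half_le_exp_sixth[of L] by (simp add: ln_div)
  qed simp
  have "exp (L / 6) = real N powr (1/6)"
    using assms by (simp add: L_def powr_def)
  hence "sqrt (real N) = x * exp (L / 6)"
    by (simp add: x_def powr_half_sqrt[symmetric] flip: powr_add)
  hence "- sqrt (real N) = x * - exp (L / 6)" by simp
  also have "\<dots> \<le> x * ln c"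
    using \<open>- exp (L / 6) \<le> ln c\<close> \<open>x > 0\<close> by (intro mult_left_mono) auto
  finally have "exp (- sqrt (real N)) \<le> exp (x * ln c)" by simp
  also have "\<dots> = c powr x" using \<open>c > 0\<close> by (simp add: powr_def mult.commute)
  also have "\<dots> \<le> c powr real (card S)"
    using card_primes_upto_less_le[of x N] \<open>x > 0\<close> \<open>0 < c\<close> \<open>c \<le> 1\<close>
    by (intro powr_mono') (auto simp: S_def)
  also have "\<dots> = (\<Prod>p\<in>primes_upto N. if p \<in> S then c else 1)"
    using \<open>0 < c\<close> finite_primes_upto[of N] Int_absorb1[of S "primes_upto N"]
    by (simp add: powr_realpow prod.If_cases) (auto simp: S_def)
  also have "\<dots> \<le> (\<Prod>p\<in>primes_upto N. pi * ln (real p) / L)"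
    using factor \<open>0 < c\<close> by (intro prod_mono) auto
  finally show ?thesis by (simp add: L_def)
qed

theorem theorem3:
  fixes N :: nat and a :: "nat \<Rightarrow> complex" and lam :: real
  assumes "N \<ge> 2" and "0 < lam" and "lam < 1"
  shows "measure (torus_measure (primes_upto N))
           {z \<in> torus (primes_upto N).
              cmod (dirichlet_poly N a z) \<ge>
                lam * (SUP w\<in>torus (primes_upto N). cmod (dirichlet_poly N a w))}
         \<ge> ((1 - lam) / pi\<^sup>2) ^ card (primes_upto N) * exp (- sqrt (real N))"
proof -
  have "((1 - lam) / pi\<^sup>2) ^ card (primes_upto N) * exp (- sqrt (real N))
          \<le> ((1 - lam) / pi\<^sup>2) ^ card (primes_upto N) * (\<Prod>p\<in>primes_upto N. pi * ln (real p) / ln (real N))"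
    using assms by (intro mult_left_mono prod_pi_ln_div_ln_ge) auto
  also have "\<dots> = (\<Prod>p\<in>primes_upto N. (1 - lam) / pi\<^sup>2 * (pi * ln (real p) / ln (real N)))"
    by (simp only: prod.distrib prod_constant)
  also have "\<dots> = (\<Prod>p\<in>primes_upto N. (1 - lam) * ln (real p) / ln (real N) / pi)"
    using assms by (intro prod.cong refl) (simp add: power2_eq_square field_simps)
  also have "\<dots> \<le> measure (torus_measure (primes_upto N))
                  {z \<in> torus (primes_upto N).
                     lam * (SUP w\<in>torus (primes_upto N). cmod (dirichlet_poly N a w)) \<le> cmod (dirichlet_poly N a z)}"
    using assms by (intro measure_superlevel_set_ge_prod) auto
  finally show ?thesis .
qed

end
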